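(* Let $f:U\to\mathbb{L}^3$ be a minface with real Weierstrass data $(g_1,g_2,\hat\omega_1du,\hat\omega_2dv)$, and let $\gamma(t)=(\gamma_1(t),\gamma_2(t))$ be the singular curve passing through a cuspidal edge $p=\gamma(0)$ (so that $\gamma$ consists of cuspidal edges near $t=0$). Then the Gaussian curvature $K$ of $f$ (at regular points near $\gamma$) and the singular curvature $\kappa_s$ of $\gamma$ have the same sign. In particular, $\kappa_s(t)=0$ if and only if $g_1'(\gamma_1(t))=0$ or $g_2'(\gamma_2(t))=0$.
   Context: $\mathbb{L}^3$ is $\mathbb{R}^3$ with the Lorentzian metric $-(dx^0)^2+(dx^1)^2+(dx^2)^2$. $U\subset\mathbb{R}^2$ is a domain with coordinates $(u,v)$; $f:U\to\mathbb{L}^3$ is a minface with real Weierstrass data $(g_1,g_2,\hat\omega_1du,\hat\omega_2dv)$ if $g_1=g_1(u)$, $g_2=g_2(v)$ are smooth, $\hat\omega_1=\hat\omega_1(u)$, $\hat\omega_2=\hat\omega_2(v)$ are smooth and nowhere zero, $g_1g_2\neq1$ on an open dense set, and $f(u,v)=\frac12\int_{u_0}^u(-1-g_1^2,1-g_1^2,2g_1)\hat\omega_1du+\frac12\int_{v_0}^v(1+g_2^2,1-g_2^2,-2g_2)\hat\omega_2dv+f(u_0,v_0)$. Singular points (where $f$ is not an immersion) are exactly the points with $g_1g_2=1$; at regular points $f$ is a timelike immersion with zero mean curvature, with Gaussian curvature $K=\det S$ ($S$ the shape operator w.r.t. a spacelike unit normal). Identify $\mathbb{L}^3$ with Euclidean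 $\mathbb{R}^3$ with Euclidean inner product $\langle\,,\,\rangle_E$. Then $n=\big((1-g_1g_2)^2+2(g_1+g_2)^2\big)^{-1/2}(-g_1-g_2,\,g_1-g_2,\,-1-g_1g_2)$ is a Euclidean unit normal field of $f$; set $\lambda=\det(f_u,f_v,n)$. A singular point is a cuspidal edge if the germ of $f$ there is $\mathcal{A}$-equivalent (equal up to local diffeomorphisms of source and target) to the germ of $(u,v)\mapsto(u^2,u^3,v)$ at the origin. The singular curve is a regular curve $\gamma$ in $U$ parametrizing the singular set near $p$; a null vector field $\eta(t)$ is a nonzero vector field along $\gamma$ with $\eta(t)\in\ker df_{\gamma(t)}$, chosen so that $(\gamma'(t),\eta(t))$ is positively oriented. The singular curvature is $\kappa_s(t)=\mathrm{sgn}(d\lambda(\eta(t)))\,\dfrac{\det(\hat\gamma'(t),\hat\gamma''(t),n(\gamma(t)))}{|\hat\gamma'(t)|^3}$, where $\hat\gamma=f\circ\gamma$ and $|\cdot|$ is the Euclidean norm. *)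

theory Defs
  imports "HOL-Analysis.Analysis"
begin

fun Ck :: "nat \<Rightarrow> 'a::real_normed_vector set \<Rightarrow> ('a \<Rightarrow> 'b::real_normed_vector) \<Rightarrow> bool" where
  "Ck 0 S h = continuous_on S h"
| "Ck (Suc n) S h = ((\<forall>x\<in>S. h differentiable (at x)) \<and>
                      (\<forall>v. Ck n S (\<lambda>x. frechet_derivative h (at x) v)))"

definition smooth_on :: "'a::real_normed_vector set \<Rightarrow> ('a \<Rightarrow> 'b::real_normed_vector) \<Rightarrow> bool" where
  "smooth_on S h \<longleftrightarrow> (\<forall>n. Ck n S h)"

(* Lorentzian inner product -(dx0)^2 + (dx1)^2 + (dx2)^2 on real^3 (components 1,2,3) *)
definition lor :: "real^3 \<Rightarrow> real^3 \<Rightarrow> real" where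
  "lor x y = - x$1 * y$1 + x$2 * y$2 + x$3 * y$3"

definition det3 :: "real^3 \<Rightarrow> real^3 \<Rightarrow> real^3 \<Rightarrow> real" where
  "det3 a b c = det (vector [a, b, c] :: real^3^3)"

definition pdu :: "(real \<times> real \<Rightarrow> 'b::real_normed_vector) \<Rightarrow> real \<times> real \<Rightarrow> 'b" where
  "pdu h q = frechet_derivative h (at q) (1, 0)"

definition pdv :: "(real \<times> real \<Rightarrow> 'b::real_normed_vector) \<Rightarrow> real \<times> real \<Rightarrow> 'b" where
  "pdv h q = frechet_derivative h (at q) (0, 1)"

definition oint :: "real \<Rightarrow> real \<Rightarrow> (real \<Rightarrow> real^3) \<Rightarrow> real^3" where
  "oint a b h = (if a \<le> b then integral {a..b} h else - integral {b..a} h)"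

definition minface_real_W ::
  "(real \<times> real) set \<Rightarrow> (real \<Rightarrow> real) \<Rightarrow> (real \<Rightarrow> real) \<Rightarrow> (real \<Rightarrow> real) \<Rightarrow> (real \<Rightarrow> real)
   \<Rightarrow> (real \<times> real \<Rightarrow> real^3) \<Rightarrow> bool" where
  "minface_real_W U g1 g2 w1 w2 f \<longleftrightarrow>
     open U \<and> connected U \<and> U \<noteq> {} \<and>
     smooth_on (fst ` U) g1 \<and> smooth_on (snd ` U) g2 \<and>
     smooth_on (fst ` U) w1 \<and> smooth_on (snd ` U) w2 \<and>
     (\<forall>u\<in>fst ` U. w1 u \<noteq> 0) \<and> (\<forall>v\<in>snd ` U. w2 v \<noteq> 0) \<and>
     U \<subseteq> closure {q\<in>U. g1 (fst q) * g2 (snd q) \<noteq> 1} \<and>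
     (\<exists>u0 v0. (u0, v0) \<in> U \<and>
        (\<forall>u v. (u, v) \<in> U \<longrightarrow>
           f (u, v) =
             oint u0 u (\<lambda>s. (w1 s / 2) *\<^sub>R vector [-1 - (g1 s)\<^sup>2, 1 - (g1 s)\<^sup>2, 2 * g1 s])
           + oint v0 v (\<lambda>s. (w2 s / 2) *\<^sub>R vector [1 + (g2 s)\<^sup>2, 1 - (g2 s)\<^sup>2, -2 * g2 s])
           + f (u0, v0)))"

definition sing_set :: "(real \<times> real) set \<Rightarrow> (real \<Rightarrow> real) \<Rightarrow> (real \<Rightarrow> real) \<Rightarrow> (real \<times> real) set" where
  "sing_set U g1 g2 = {q\<in>U. g1 (fst q) * g2 (snd q) = 1}"

definition enormal :: "(real \<Rightarrow> real) \<Rightarrow> (real \<Rightarrow> real) \<Rightarrow> real \<times> real \<Rightarrow> real^3" where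
  "enormal g1 g2 q = (let a = g1 (fst q); b = g2 (snd q) in
     (1 / sqrt ((1 - a * b)\<^sup>2 + 2 * (a + b)\<^sup>2)) *\<^sub>R vector [- a - b, a - b, -1 - a * b])"

definition lam :: "(real \<times> real \<Rightarrow> real^3) \<Rightarrow> (real \<Rightarrow> real) \<Rightarrow> (real \<Rightarrow> real) \<Rightarrow> real \<times> real \<Rightarrow> real" where
  "lam f g1 g2 q = det3 (pdu f q) (pdv f q) (enormal g1 g2 q)"

(* Gaussian curvature K = det S, S = I^{-1} II the shape operator w.r.t. a spacelike
   (Lorentzian) unit normal nu; det S = (LN - M^2)/(EG - F^2), independent of the sign of nu *)
definition gaussK :: "(real \<times> real \<Rightarrow> real^3) \<Rightarrow> real \<times> real \<Rightarrow> real" where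
  "gaussK f q = (let fu = pdu f q; fv = pdv f q;
       fuu = pdu (pdu f) q; fuv = pdv (pdu f) q; fvv = pdv (pdv f) q;
       nu = (SOME nu. lor nu fu = 0 \<and> lor nu fv = 0 \<and> lor nu nu = 1);
       E = lor fu fu; F = lor fu fv; G = lor fv fv;
       L = lor fuu nu; M = lor fuv nu; N = lor fvv nu
     in (L * N - M\<^sup>2) / (E * G - F\<^sup>2))"

definition cusp_std :: "real \<times> real \<Rightarrow> real^3" where
  "cusp_std w = vector [(fst w)\<^sup>2, (fst w) ^ 3, snd w]"

(* the germ of f at p is A-equivalent to the germ of (u,v) |-> (u^2,u^3,v) at 0 *)
definition cuspidal_edge :: "(real \<times> real) set \<Rightarrow> (real \<times> real \<Rightarrow> real^3) \<Rightarrow> real \<times> real \<Rightarrow> bool" where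
  "cuspidal_edge U f p \<longleftrightarrow> p \<in> U \<and>
     (\<exists>W V (\<phi> :: real \<times> real \<Rightarrow> real \<times> real) \<psi> Y1 Y2 (\<Phi> :: real^3 \<Rightarrow> real^3) \<Psi>.
        open W \<and> (0, 0) \<in> W \<and> open V \<and> V \<subseteq> U \<and> \<phi> (0, 0) = p \<and>
        \<phi> ` W = V \<and> \<psi> ` V = W \<and>
        smooth_on W \<phi> \<and> smooth_on V \<psi> \<and>
        (\<forall>w\<in>W. \<psi> (\<phi> w) = w) \<and> (\<forall>x\<in>V. \<phi> (\<psi> x) = x) \<and>
        open Y1 \<and> open Y2 \<and> f ` V \<subseteq> Y1 \<and> \<Phi> ` Y1 = Y2 \<and> \<Psi> ` Y2 = Y1 \<and>
        smooth_on Y1 \<Phi> \<and> smooth_on Y2 \<Psi> \<and>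
        (\<forall>y\<in>Y1. \<Psi> (\<Phi> y) = y) \<and> (\<forall>z\<in>Y2. \<Phi> (\<Psi> z) = z) \<and>
        (\<forall>w\<in>W. \<Phi> (f (\<phi> w)) = cusp_std w))"

definition sing_curv ::
  "(real \<times> real \<Rightarrow> real^3) \<Rightarrow> (real \<Rightarrow> real) \<Rightarrow> (real \<Rightarrow> real) \<Rightarrow> (real \<Rightarrow> real \<times> real)
   \<Rightarrow> (real \<Rightarrow> real \<times> real) \<Rightarrow> real \<Rightarrow> real" where
  "sing_curv f g1 g2 \<gamma> \<eta> t =
     (let gh = f \<circ> \<gamma>;
          d1 = vector_derivative gh (at t);
          d2 = vector_derivative (\<lambda>s. vector_derivative gh (at s)) (at t)
      in sgn (frechet_derivative (lam f g1 g2) (at (\<gamma> t)) (\<eta> t))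
         * det3 d1 d2 (enormal g1 g2 (\<gamma> t)) / norm d1 ^ 3)"

end

theory Submission
  imports Defs
begin

text \<open>At a regular point \<open>K = 4 g\<^sub>1' g\<^sub>2' / (\<omega>\<^sub>1 \<omega>\<^sub>2 (1 - g\<^sub>1 g\<^sub>2)\<^sup>4)\<close>, so near a
  singular point where the continuous function \<open>\<omega>\<^sub>1 \<omega>\<^sub>2 g\<^sub>1' g\<^sub>2'\<close> does not vanish, \<open>K\<close> has
  its sign, while regular points with \<open>K = 0\<close> accumulate at singular points where \<open>g\<^sub>1'\<close> or
  \<open>g\<^sub>2'\<close> vanishes.  On the singular set \<open>f\<^sub>v\<close> is a multiple of \<open>f\<^sub>u\<close>, so
  \<open>det((f \<circ> \<gamma>)', (f \<circ> \<gamma>)'', n)\<close> only involves \<open>f\<^sub>u\<^sub>u\<close> and \<open>f\<^sub>v\<^sub>v\<close>; together with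
  \<open>d\<lambda>(\<eta>)\<close>, the tangency of \<open>\<gamma>\<close> to \<open>{g\<^sub>1 g\<^sub>2 = 1}\<close> and the orientation of \<open>(\<gamma>', \<eta>)\<close> this
  shows that the singular curvature, too, has the sign of \<open>\<omega>\<^sub>1 \<omega>\<^sub>2 g\<^sub>1' g\<^sub>2'\<close>.\<close>

lemma smooth_on_imp_DERIV:
  fixes h :: "real \<Rightarrow> real"
  assumes "smooth_on S h" "open S"
  shows "\<And>x. x \<in> S \<Longrightarrow> (h has_real_derivative deriv h x) (at x)"
    and "continuous_on S (deriv h)"
proof -
  have "Ck 2 S h" using assms(1) unfolding smooth_on_def by blast
  then have diff: "\<forall>x\<in>S. h differentiable (at x)"
    and diff': "\<forall>x\<in>S. (\<lambda>x. frechet_derivative h (at x) 1) differentiable (at x)"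
    by (simp_all add: numeral_2_eq_2)
  show D: "\<And>x. x \<in> S \<Longrightarrow> (h has_real_derivative deriv h x) (at x)"
    using diff DERIV_deriv_iff_real_differentiable by blast
  have "frechet_derivative h (at x) 1 = deriv h x" if "x \<in> S" for x
    using frechet_derivative_at[OF D[OF that, unfolded has_field_derivative_def]]
    by (metis mult.right_neutral)
  moreover have "continuous_on S (\<lambda>x. frechet_derivative h (at x) 1)"
    using diff' by (simp add: continuous_at_imp_continuous_on differentiable_imp_continuous_within)
  ultimately show "continuous_on S (deriv h)"
    using continuous_on_cong by (metis (mono_tags, lifting))
qed

lemma smooth_on_imp_vector_derivative:
  fixes h :: "real \<Rightarrow> 'b::real_normed_vector"
  assumes "smooth_on S h" "open S" "t \<in> S"
  shows "(h has_vector_derivative vector_derivative h (at t)) (at t)"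
    and "((\<lambda>s. vector_derivative h (at s)) has_vector_derivative
           vector_derivative (\<lambda>s. vector_derivative h (at s)) (at t)) (at t)"
proof -
  have "Ck 2 S h" using assms(1) unfolding smooth_on_def by blast
  then have diff: "\<forall>x\<in>S. h differentiable (at x)"
    and diff': "\<forall>x\<in>S. (\<lambda>x. frechet_derivative h (at x) 1) differentiable (at x)"
    by (simp_all add: numeral_2_eq_2)
  show "(h has_vector_derivative vector_derivative h (at t)) (at t)"
    using diff assms(3) vector_derivative_works by blast
  have eq: "frechet_derivative h (at x) 1 = vector_derivative h (at x)" if "x \<in> S" for x
    using frechet_derivative_at[OF vector_derivative_works[THEN iffD1, OF bspec[OF diff that],
          unfolded has_vector_derivative_def]] by (metis scale_one)
  obtain D where "((\<lambda>x. frechet_derivative h (at x) 1) has_vector_derivative D) (at t)"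
    using diff' assms(3) vector_derivative_works by blast
  then have "((\<lambda>s. vector_derivative h (at s)) has_vector_derivative D) (at t)"
    by (rule has_vector_derivative_transform_within_open[OF _ assms(2,3)]) (simp add: eq)
  then show "((\<lambda>s. vector_derivative h (at s)) has_vector_derivative
           vector_derivative (\<lambda>s. vector_derivative h (at s)) (at t)) (at t)"
    using vector_derivative_at by fastforce
qed

lemma open_swap_image:
  assumes "open S"
  shows "open (prod.swap ` S)"
proof -
  have "prod.swap ` S = prod.swap -` S" by force
  then show ?thesis using assms by (simp add: continuous_on_swap open_vimage)
qed

lemma filtermap_swap_at_within:
  fixes q :: "'a::real_normed_vector \<times> 'b::real_normed_vector"
  shows "filtermap prod.swap (at q within S) = at (prod.swap q) within prod.swap ` S"
  by (rule filtermap_linear_at_within) (auto intro: continuous_intros bij_swap open_swap_image)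

lemma oint_has_vector_derivative:
  assumes S: "open S" "is_interval S" "u0 \<in> S" "u \<in> S" and cont: "continuous_on S a"
  shows "((\<lambda>x. oint u0 x a) has_vector_derivative a u) (at u)"
proof -
  obtain e where e: "e > 0" "ball u e \<subseteq> S" using S(1,4) open_contains_ball by blast
  define c where "c = min u0 (u - e/2)"
  define b where "b = max u0 (u + e/2)"
  have "u - e/2 \<in> S" "u + e/2 \<in> S" using e by (auto simp: dist_real_def)
  then have "c \<in> S" "b \<in> S" using S(3) unfolding c_def b_def by (simp_all add: min_def max_def)
  then have "{c..b} \<subseteq> S" using S(2) unfolding is_interval_1 by (meson atLeastAtMost_iff subsetI)
  then have cont_cb: "continuous_on {c..b} a" using continuous_on_subset[OF cont] by blast
  have u: "c < u" "u < b" and u0: "u0 \<in> {c..b}" using e(1) unfolding c_def b_def by simp_all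
  have int: "a integrable_on {x..y}" if "c \<le> x" "y \<le> b" for x y
    by (rule integrable_continuous_real[OF continuous_on_subset[OF cont_cb]]) (use that in auto)
  have split: "oint u0 x a = integral {c..x} a - integral {c..u0} a" if "x \<in> {c<..<b}" for x
  proof (cases "u0 \<le> x")
    case True
    have "integral {c..u0} a + integral {u0..x} a = integral {c..x} a"
      by (rule Henstock_Kurzweil_Integration.integral_combine) (use that u0 True in \<open>auto intro!: int\<close>)
    then show ?thesis using True by (simp add: oint_def algebra_simps)
  next
    case False
    have "integral {c..x} a + integral {x..u0} a = integral {c..u0} a"
      by (rule Henstock_Kurzweil_Integration.integral_combine) (use that u0 False in \<open>auto intro!: int\<close>)
    then show ?thesis using False by (simp add: oint_def algebra_simps)
  qed
  have "((\<lambda>x. integral {c..x} a) has_vector_derivative a u) (at u within {c<..<b})"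
    using integral_has_vector_derivative[OF cont_cb, of u] u
    by (auto intro: has_vector_derivative_within_subset)
  then have "((\<lambda>x. integral {c..x} a - integral {c..u0} a) has_vector_derivative a u) (at u)"
    using at_within_open[of u "{c<..<b}"] u by (auto intro!: derivative_eq_intros)
  then show ?thesis
    by (rule has_vector_derivative_transform_within_open[of _ _ _ "{c<..<b}"]) (use u split in auto)
qed

lemma has_derivative_comp_fst:
  assumes "(h has_vector_derivative d) (at (fst q))"
  shows "((\<lambda>x. h (fst x)) has_derivative (\<lambda>k. fst k *\<^sub>R d)) (at q)"
  using diff_chain_at[OF has_derivative_fst[OF has_derivative_ident]
      assms[unfolded has_vector_derivative_def]] by (simp add: o_def)

lemma has_derivative_comp_snd:
  assumes "(h has_vector_derivative d) (at (snd q))"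
  shows "((\<lambda>x. h (snd x)) has_derivative (\<lambda>k. snd k *\<^sub>R d)) (at q)"
  using diff_chain_at[OF has_derivative_snd[OF has_derivative_ident]
      assms[unfolded has_vector_derivative_def]] by (simp add: o_def)

lemma has_derivative_real_comp_fst:
  "(h has_real_derivative d) (at (fst q)) \<Longrightarrow> ((\<lambda>x. h (fst x)) has_derivative (\<lambda>k. fst k * d)) (at q)"
  using has_derivative_comp_fst[of h d q] by (simp add: has_real_derivative_iff_has_vector_derivative)

lemma has_derivative_real_comp_snd:
  "(h has_real_derivative d) (at (snd q)) \<Longrightarrow> ((\<lambda>x. h (snd x)) has_derivative (\<lambda>k. snd k * d)) (at q)"
  using has_derivative_comp_snd[of h d q] by (simp add: has_real_derivative_iff_has_vector_derivative)

lemma has_real_derivative_fst: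
  "(g has_vector_derivative d) (at t) \<Longrightarrow> ((\<lambda>s. fst (g s)) has_real_derivative fst d) (at t)"
  unfolding has_vector_derivative_def has_field_derivative_def
  by (drule has_derivative_fst) (simp add: mult.commute[of _ "fst d"])

lemma has_real_derivative_snd:
  "(g has_vector_derivative d) (at t) \<Longrightarrow> ((\<lambda>s. snd (g s)) has_real_derivative snd d) (at t)"
  unfolding has_vector_derivative_def has_field_derivative_def
  by (drule has_derivative_snd) (simp add: mult.commute[of _ "snd d"])

section \<open>Regular points near the level set \<open>{a(u) b(v) = 1}\<close>\<close>

lemma eventually_nhds_deriv_zero:
  fixes b :: "real \<Rightarrow> real"
  assumes const: "\<forall>\<^sub>F v in nhds v0. b v = c" and S: "open S" "v0 \<in> S"
    and DERIV: "\<And>v. v \<in> S \<Longrightarrow> (b has_real_derivative deriv b v) (at v)"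
  shows "\<forall>\<^sub>F v in nhds v0. deriv b v = 0"
proof -
  have "\<forall>\<^sub>F v in nhds v0. v \<in> S \<and> (\<forall>\<^sub>F y in nhds v. b y = c)"
    using eventually_nhds_in_open[OF S] eventually_eventually[THEN iffD2, OF const] by (rule eventually_conj)
  then show ?thesis
  proof (rule eventually_mono, safe)
    fix v assume v: "v \<in> S" and near: "\<forall>\<^sub>F y in nhds v. b y = c"
    then have "\<forall>\<^sub>F y in at v. b y = c" and "b v = c"
      unfolding eventually_nhds_conv_at by blast+
    then have "(b has_real_derivative 0) (at v) \<longleftrightarrow> ((\<lambda>_. c) has_real_derivative 0) (at v)"
      by (rule has_field_derivative_cong_eventually)
    then have "(b has_real_derivative 0) (at v)" by simp
    then show "deriv b v = 0" using DERIV[OF v] DERIV_unique by blast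
  qed
qed

lemma frequently_deriv_zero_near_singular_fst:
  fixes a b :: "real \<Rightarrow> real" and U :: "(real \<times> real) set"
  defines "R \<equiv> {q \<in> U. a (fst q) * b (snd q) \<noteq> 1}"
  assumes U: "open U" and q0: "q0 \<in> U" "a (fst q0) * b (snd q0) = 1"
    and nontriv: "at q0 within R \<noteq> bot" and a': "deriv a (fst q0) = 0"
    and b_DERIV: "\<And>q. q \<in> U \<Longrightarrow> (b has_real_derivative deriv b (snd q)) (at (snd q))"
  shows "\<exists>\<^sub>F q in at q0 within R. deriv a (fst q) = 0 \<or> deriv b (snd q) = 0"
proof -
  obtain u0 v0 where q0_eq: "q0 = (u0, v0)" by fastforce
  have line: "((\<lambda>v. (u0, v)) \<longlongrightarrow> q0) (nhds v0)"
    unfolding q0_eq by (intro tendsto_Pair tendsto_const filterlim_ident)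
  have line_in_U: "\<forall>\<^sub>F v in nhds v0. (u0, v) \<in> U"
    using eventually_compose_filterlim[OF eventually_nhds_in_open[OF U q0(1)] line] by simp
  \<comment> \<open>Either the line \<open>u = u\<^sub>0\<close> contains regular points arbitrarily close to \<open>q\<^sub>0\<close>,
    where \<open>a' = 0\<close>, or \<open>b\<close> is constant near \<open>v\<^sub>0\<close>.\<close>
  consider (frequent) "\<exists>\<^sub>F v in at v0. a u0 * b v \<noteq> 1" | (const) "\<forall>\<^sub>F v in at v0. a u0 * b v = 1"
    by (cases "\<exists>\<^sub>F v in at v0. a u0 * b v \<noteq> 1") (auto simp: not_frequently)
  then show ?thesis
  proof cases
    case frequent
    show ?thesis
    proof (rule ccontr)
      assume "\<not> ?thesis"
      then have "\<forall>\<^sub>F q in nhds q0. q \<noteq> q0 \<longrightarrow> q \<in> R \<longrightarrow> deriv a (fst q) \<noteq> 0"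
        unfolding not_frequently eventually_at_filter by (auto elim: eventually_mono)
      from eventually_compose_filterlim[OF this line]
      have "\<forall>\<^sub>F v in nhds v0. (u0, v) \<noteq> q0 \<longrightarrow> (u0, v) \<in> R \<longrightarrow> deriv a u0 \<noteq> 0"
        by simp
      with line_in_U have "\<forall>\<^sub>F v in at v0. a u0 * b v = 1"
        unfolding eventually_at_filter
        by eventually_elim (use a' q0_eq in \<open>auto simp: R_def\<close>)
      then show False using frequent by (simp add: frequently_def)
    qed
  next
    case const
    have q0': "a u0 * b v0 = 1" using q0 q0_eq by simp
    have "\<forall>\<^sub>F v in nhds v0. a u0 * b v = 1"
      using const q0' by (simp add: eventually_nhds_conv_at)
    then have "\<forall>\<^sub>F v in nhds v0. b v = b v0"
      by eventually_elim (metis q0' mult_left_cancel mult_zero_left zero_neq_one)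
    then have "\<forall>\<^sub>F v in nhds v0. deriv b v = 0"
    proof (rule eventually_nhds_deriv_zero)
      show "open (snd ` U)" "v0 \<in> snd ` U" using U q0 q0_eq open_image_snd by force+
    qed (use b_DERIV in force)
    moreover have "(snd \<longlongrightarrow> v0) (nhds q0)"
      using tendsto_snd[OF filterlim_ident, of q0] by (simp add: q0_eq)
    ultimately have "\<forall>\<^sub>F q in nhds q0. deriv b (snd q) = 0"
      by (rule eventually_compose_filterlim)
    then have "\<forall>\<^sub>F q in at q0 within R. deriv b (snd q) = 0"
      by (simp add: eventually_at_filter eventually_mono)
    then show ?thesis by (auto intro: eventually_frequently[OF nontriv] elim: eventually_mono)
  qed
qed

lemma frequently_deriv_zero_near_singular:
  fixes a b :: "real \<Rightarrow> real" and U :: "(real \<times> real) set"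
  defines "R \<equiv> {q \<in> U. a (fst q) * b (snd q) \<noteq> 1}"
  assumes U: "open U" and q0: "q0 \<in> U" "a (fst q0) * b (snd q0) = 1"
    and nontriv: "at q0 within R \<noteq> bot"
    and deriv_zero: "deriv a (fst q0) = 0 \<or> deriv b (snd q0) = 0"
    and a_DERIV: "\<And>q. q \<in> U \<Longrightarrow> (a has_real_derivative deriv a (fst q)) (at (fst q))"
    and b_DERIV: "\<And>q. q \<in> U \<Longrightarrow> (b has_real_derivative deriv b (snd q)) (at (snd q))"
  shows "\<exists>\<^sub>F q in at q0 within R. deriv a (fst q) = 0 \<or> deriv b (snd q) = 0"
  using deriv_zero
proof
  assume "deriv a (fst q0) = 0"
  then show ?thesis
    unfolding R_def using frequently_deriv_zero_near_singular_fst assms by blast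
next
  assume b': "deriv b (snd q0) = 0"
  have swap_R: "prod.swap ` R = {q \<in> prod.swap ` U. b (fst q) * a (snd q) \<noteq> 1}"
    unfolding R_def by (auto simp: mult.commute)
  have "open (prod.swap ` U)"
    using U by (rule open_swap_image)
  moreover have "at (prod.swap q0) within prod.swap ` R \<noteq> bot"
    using nontriv by (simp add: filtermap_swap_at_within[symmetric] filtermap_bot_iff)
  ultimately have "\<exists>\<^sub>F q in at (prod.swap q0) within prod.swap ` R.
      deriv b (fst q) = 0 \<or> deriv a (snd q) = 0"
    unfolding swap_R using q0 b' a_DERIV b_DERIV
    by (intro frequently_deriv_zero_near_singular_fst) (auto simp: mult.commute)
  then show ?thesis
    by (simp add: filtermap_swap_at_within[symmetric] frequently_filtermap disj_commute)
qed

lemma eventually_sgn_eq_at: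
  fixes h :: "'a::t2_space \<Rightarrow> real"
  assumes "isCont h x" "h x \<noteq> 0"
  shows "\<forall>\<^sub>F y in at x. sgn (h y) = sgn (h x)"
proof (cases "h x > 0")
  case True
  then show ?thesis
    using order_tendstoD(1)[of h "h x" "at x" 0] assms by (auto simp: isCont_def elim!: eventually_mono)
next
  case False
  then show ?thesis
    using order_tendstoD(2)[of h "h x" "at x" 0] assms by (auto simp: isCont_def elim!: eventually_mono)
qed

lemma sgn_eq_sgn_iff:
  fixes x y :: real
  assumes "sgn x = sgn y"
  shows "x > 0 \<longleftrightarrow> y > 0" and "x < 0 \<longleftrightarrow> y < 0" and "x = 0 \<longleftrightarrow> y = 0"
  using assms by (metis sgn_1_pos sgn_1_neg sgn_0_0)+

section \<open>The Weierstrass frame\<close>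

definition Wu :: "real \<Rightarrow> real^3" where "Wu a = vector [-1 - a\<^sup>2, 1 - a\<^sup>2, 2 * a]"
definition Wv :: "real \<Rightarrow> real^3" where "Wv b = vector [1 + b\<^sup>2, 1 - b\<^sup>2, -2 * b]"
definition Wu' :: "real \<Rightarrow> real^3" where "Wu' a = vector [-2 * a, -2 * a, 2]"
definition Wv' :: "real \<Rightarrow> real^3" where "Wv' b = vector [2 * b, -2 * b, -2]"

text \<open>For \<open>a b \<noteq> 1\<close>, \<open>lnormal a b\<close> spans the Lorentz-orthogonal complement of \<open>Wu a\<close> and
  \<open>Wv b\<close>; \<open>enormal_dir a b\<close> below is its image under \<open>diag(-1, 1, 1)\<close>, hence Euclidean-orthogonal
  to both.\<close>

definition lnormal :: "real \<Rightarrow> real \<Rightarrow> real^3" where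
  "lnormal a b = vector [a + b, a - b, -1 - a * b]"

lemma Wu_has_vector_derivative: "(Wu has_vector_derivative Wu' a) (at a)"
proof -
  have "((\<lambda>a. (vector [-1, 1, 0] :: real^3) + a *\<^sub>R vector [0, 0, 2] + a\<^sup>2 *\<^sub>R vector [-1, -1, 0])
      has_vector_derivative vector [0, 0, 2] + (2 * a) *\<^sub>R vector [-1, -1, 0]) (at a)"
    by (auto intro!: derivative_eq_intros)
  moreover have "(\<lambda>a. vector [-1, 1, 0] + a *\<^sub>R vector [0, 0, 2] + a\<^sup>2 *\<^sub>R vector [-1, -1, 0]) = Wu"
    by (simp add: fun_eq_iff Wu_def vec_eq_iff forall_3)
  moreover have "vector [0, 0, 2] + (2 * a) *\<^sub>R vector [-1, -1, 0] = Wu' a"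
    by (simp add: Wu'_def vec_eq_iff forall_3)
  ultimately show ?thesis by simp
qed

lemma Wv_has_vector_derivative: "(Wv has_vector_derivative Wv' b) (at b)"
proof -
  have "((\<lambda>b. (vector [1, 1, 0] :: real^3) + b *\<^sub>R vector [0, 0, -2] + b\<^sup>2 *\<^sub>R vector [1, -1, 0])
      has_vector_derivative vector [0, 0, -2] + (2 * b) *\<^sub>R vector [1, -1, 0]) (at b)"
    by (auto intro!: derivative_eq_intros)
  moreover have "(\<lambda>b. vector [1, 1, 0] + b *\<^sub>R vector [0, 0, -2] + b\<^sup>2 *\<^sub>R vector [1, -1, 0]) = Wv"
    by (simp add: fun_eq_iff Wv_def vec_eq_iff forall_3)
  moreover have "vector [0, 0, -2] + (2 * b) *\<^sub>R vector [1, -1, 0] = Wv' b"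
    by (simp add: Wv'_def vec_eq_iff forall_3)
  ultimately show ?thesis by simp
qed

lemma lor_scaleR_left [simp]: "lor (c *\<^sub>R x) y = c * lor x y"
  and lor_scaleR_right [simp]: "lor x (c *\<^sub>R y) = c * lor x y"
  and lor_add_left [simp]: "lor (x + y) z = lor x z + lor y z"
  and lor_zero_left [simp]: "lor 0 y = 0"
  and lor_commute: "lor x y = lor y x"
  by (simp_all add: lor_def algebra_simps)

lemma lor_Wu_Wv:
  shows "lor (Wu a) (Wu a) = 0" and "lor (Wv b) (Wv b) = 0"
    and "lor (Wu a) (Wv b) = 2 * (1 - a * b)\<^sup>2"
  by (simp_all add: lor_def Wu_def Wv_def power2_eq_square algebra_simps)

lemma lor_lnormal:
  shows "lor (Wu a) (lnormal a b) = 0" and "lor (Wv b) (lnormal a b) = 0"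
    and "lor (Wu' a) (lnormal a b) = - 2 * (1 - a * b)"
    and "lor (Wv' b) (lnormal a b) = 2 * (1 - a * b)"
    and "lor (lnormal a b) (lnormal a b) = (1 - a * b)\<^sup>2"
  by (simp_all add: lor_def lnormal_def Wu_def Wv_def Wu'_def Wv'_def power2_eq_square algebra_simps)

lemma lor_orthogonal_Wu_Wv:
  assumes ab: "a * b \<noteq> 1" and "lor \<nu> (Wu a) = 0" "lor \<nu> (Wv b) = 0"
  shows "\<exists>c. \<nu> = c *\<^sub>R lnormal a b"
proof -
  define x y z where "x = \<nu>$1" "y = \<nu>$2" "z = \<nu>$3"
  have E1: "(1 + a\<^sup>2) * x + (1 - a\<^sup>2) * y + 2 * a * z = 0"
    and E2: "- (1 + b\<^sup>2) * x + (1 - b\<^sup>2) * y - 2 * b * z = 0"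
    using assms(2,3) by (simp_all add: lor_def Wu_def Wv_def x_y_z_def algebra_simps)
  define c where "c = - (a * x - a * y + z) / (1 - a * b)"
  have nz: "1 - a * b \<noteq> 0" using ab by simp
  have "(1 - a * b) * x = c * (1 - a * b) * (a + b)"
    and "(1 - a * b) * y = c * (1 - a * b) * (a - b)"
    and "(1 - a * b) * z = c * (1 - a * b) * (-1 - a * b)"
    unfolding c_def using nz E1 E2 by (simp_all add: field_simps) algebra+
  then have "x = c * (a + b)" "y = c * (a - b)" "z = c * (-1 - a * b)"
    using nz by (simp_all add: mult.assoc)
  then show ?thesis
    by (intro exI[of _ c]) (simp add: vec_eq_iff forall_3 lnormal_def x_y_z_def)
qed

definition enormal_dir :: "real \<Rightarrow> real \<Rightarrow> real^3" where
  "enormal_dir a b = vector [- a - b, a - b, -1 - a * b]"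

definition normal_sqlen :: "real \<Rightarrow> real \<Rightarrow> real" where
  "normal_sqlen a b = (1 - a * b)\<^sup>2 + 2 * (a + b)\<^sup>2"

lemma normal_sqlen_eq: "normal_sqlen a b = (norm (enormal_dir a b))\<^sup>2"
  unfolding power2_norm_eq_inner inner_vec_def sum_3 normal_sqlen_def enormal_dir_def
  by (simp add: power2_eq_square algebra_simps)

lemma enormal_dir_nonzero: "enormal_dir a b \<noteq> 0"
proof
  assume "enormal_dir a b = 0"
  then have "- a - b = 0" "a - b = 0" "-1 - a * b = 0"
    unfolding enormal_dir_def vec_eq_iff forall_3 by simp_all
  then show False by simp
qed

lemma normal_sqlen_pos: "normal_sqlen a b > 0"
  unfolding normal_sqlen_eq using enormal_dir_nonzero by simp

lemma enormal_eq:
  "enormal g1 g2 q = (1 / sqrt (normal_sqlen (g1 (fst q)) (g2 (snd q))))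
      *\<^sub>R enormal_dir (g1 (fst q)) (g2 (snd q))"
  by (simp add: enormal_def normal_sqlen_def enormal_dir_def Let_def)

lemma det3_expand:
  "det3 x y z = x$1 * y$2 * z$3 + x$2 * y$3 * z$1 + x$3 * y$1 * z$2
              - x$1 * y$3 * z$2 - x$2 * y$1 * z$3 - x$3 * y$2 * z$1"
  unfolding det3_def det_3 by simp

lemma det3_scaleR_left: "det3 (c *\<^sub>R x) y z = c * det3 x y z"
  and det3_scaleR_mid: "det3 x (c *\<^sub>R y) z = c * det3 x y z"
  and det3_scaleR_right: "det3 x y (c *\<^sub>R z) = c * det3 x y z"
  and det3_add_mid: "det3 x (y + z) w = det3 x y w + det3 x z w"
  and det3_same: "det3 x x z = 0"
  unfolding det3_expand by (simp_all add: algebra_simps)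

lemma det3_Wu_Wv_enormal_dir:
  "det3 (Wu a) (Wv b) (enormal_dir a b) = 2 * (1 - a * b) * normal_sqlen a b"
  unfolding det3_expand by (simp add: Wu_def Wv_def enormal_dir_def normal_sqlen_def power2_eq_square field_simps)

lemma Wv_at_singular:
  assumes "a * b = 1"
  shows "Wv b = (- b\<^sup>2) *\<^sub>R Wu a"
proof -
  have "1 + b\<^sup>2 = - b\<^sup>2 * (-1 - a\<^sup>2)" "1 - b\<^sup>2 = - b\<^sup>2 * (1 - a\<^sup>2)" "-2 * b = - b\<^sup>2 * (2 * a)"
    using assms by algebra+
  then show ?thesis unfolding Wv_def by (simp only:) (simp add: Wu_def vec_eq_iff forall_3)
qed

lemma det3_Wu_Wu'_at_singular:
  "a * b = 1 \<Longrightarrow> det3 (Wu a) (Wu' a) (enormal_dir a b) = - 4 * (1 + a\<^sup>2)\<^sup>2 * b"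
  unfolding det3_expand by (simp add: Wu_def Wu'_def enormal_dir_def) algebra

lemma det3_Wu_Wv'_at_singular:
  "a * b = 1 \<Longrightarrow> det3 (Wu a) (Wv' b) (enormal_dir a b) = - 4 * (1 + a\<^sup>2)\<^sup>2 * b"
  unfolding det3_expand by (simp add: Wu_def Wv'_def enormal_dir_def) algebra

section \<open>Algebra at a singular point\<close>

lemma singular_image_tangent_nonzero:
  fixes a b W1 W2 p1 p2 e1 e2 :: real
  assumes ab: "a * b = 1" and W2: "W2 \<noteq> 0"
    and null: "e1 * W1 * a = e2 * W2 * b" and orient: "p1 * e2 - p2 * e1 > 0"
  shows "p1 * W1 * a\<^sup>2 - p2 * W2 \<noteq> 0"
proof
  assume "p1 * W1 * a\<^sup>2 - p2 * W2 = 0"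
  moreover have "e1 * (p1 * W1 * a\<^sup>2 - p2 * W2) = W2 * (p1 * e2 - p2 * e1)"
    using null ab by algebra
  ultimately show False using W2 orient by simp
qed

lemma sgn_singular_curvature_identity:
  fixes a b W1 W2 d1 d2 p1 p2 e1 e2 :: real
  assumes ab: "a * b = 1" and W: "W1 \<noteq> 0" "W2 \<noteq> 0"
    and null: "e1 * W1 * a = e2 * W2 * b" and orient: "p1 * e2 - p2 * e1 > 0"
    and tangent: "d1 * b * p1 + a * d2 * p2 = 0"
  shows "sgn (W1 * W2 * (d1 * b * e1 + a * d2 * e2) * (p1 * W1 * a\<^sup>2 - p2 * W2)
              * (p1\<^sup>2 * W1 * d1 + p2\<^sup>2 * W2 * d2) * a) = sgn (W1 * W2 * d1 * d2)"
proof -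
  define \<mu> where "\<mu> = p1 * W1 * a\<^sup>2 - p2 * W2"
  define S where "S = p1\<^sup>2 * W1 * d1 + p2\<^sup>2 * W2 * d2"
  define S1 where "S1 = d1 * b * e1 + a * d2 * e2"
  have a0: "a \<noteq> 0" and b0: "b \<noteq> 0" using ab by auto
  have \<mu>0: "\<mu> \<noteq> 0"
    unfolding \<mu>_def using singular_image_tangent_nonzero[OF ab W(2) null orient] .
  show ?thesis
  proof (cases "d1 = 0 \<or> d2 = 0")
    case True
    then have "d1 * p1 = 0 \<and> d2 * p2 = 0" using tangent a0 b0 by auto
    then have "S = 0" unfolding S_def by (auto simp: power2_eq_square)
    then show ?thesis using True by (auto simp: S_def)
  next
    case False
    define X where "X = d1 * W2 + a ^ 4 * W1 * d2"
    have "p2 \<noteq> 0"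
      using False tangent orient b0 by auto
    have "d1 * \<mu> = - p2 * X"
      unfolding \<mu>_def X_def using tangent ab by algebra
    then have "X \<noteq> 0" using False \<mu>0 by auto
    with \<open>p2 \<noteq> 0\<close> orient have pos: "(p1 * e2 - p2 * e1) * p2\<^sup>2 * X\<^sup>2 > 0" by simp
    have key: "(a * S1 * \<mu> * S) * d1 = (p1 * e2 - p2 * e1) * p2\<^sup>2 * X\<^sup>2 * d2"
      unfolding S1_def \<mu>_def S_def X_def using null tangent ab by algebra
    have "sgn (a * S1 * \<mu> * S) * sgn d1 = sgn ((p1 * e2 - p2 * e1) * p2\<^sup>2 * X\<^sup>2) * sgn d2"
      by (metis key sgn_mult)
    then have "sgn (a * S1 * \<mu> * S) * sgn d1 = sgn d2" using pos by simp
    then have "sgn (a * S1 * \<mu> * S) * (sgn d1 * sgn d1) = sgn d1 * sgn d2"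
      by (metis mult.assoc mult.commute)
    moreover have "sgn d1 * sgn d1 = 1" using False by (simp add: sgn_if)
    ultimately have "sgn (a * S1 * \<mu> * S) = sgn (d1 * d2)" by (simp add: sgn_mult)
    then show ?thesis
      unfolding \<mu>_def[symmetric] S_def[symmetric] S1_def[symmetric]
      by (simp add: sgn_mult ac_simps)
  qed
qed

lemma Wu_nonzero: "Wu a \<noteq> 0"
proof
  assume "Wu a = 0"
  then have "-1 - a\<^sup>2 = 0" unfolding Wu_def by (simp add: vec_eq_iff forall_3)
  moreover have "a\<^sup>2 \<ge> 0" by simp
  ultimately show False by linarith
qed

context
  fixes a b W1 W2 dW1 dW2 d1 d2 p1 p2 r1 r2 :: real
  assumes ab: "a * b = 1"
begin

lemma singular_image_tangent:
  "p1 *\<^sub>R (W1 / 2) *\<^sub>R Wu a + p2 *\<^sub>R (W2 / 2) *\<^sub>R Wv b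
     = (b\<^sup>2 / 2 * (p1 * W1 * a\<^sup>2 - p2 * W2)) *\<^sub>R Wu a"
proof -
  have "a\<^sup>2 * b\<^sup>2 = 1" using ab by (simp add: power_mult_distrib[symmetric])
  then have "p1 * W1 / 2 - p2 * W2 * b\<^sup>2 / 2 = b\<^sup>2 / 2 * (p1 * W1 * a\<^sup>2 - p2 * W2)"
    by (simp add: algebra_simps)
  moreover have "p1 *\<^sub>R (W1 / 2) *\<^sub>R Wu a + p2 *\<^sub>R (W2 / 2) *\<^sub>R Wv b
      = (p1 * W1 / 2 - p2 * W2 * b\<^sup>2 / 2) *\<^sub>R Wu a"
    unfolding Wv_at_singular[OF ab] by (simp add: algebra_simps)
  ultimately show ?thesis by simp
qed

lemma det3_singular_frame:
  "det3 (p1 *\<^sub>R (W1 / 2) *\<^sub>R Wu a + p2 *\<^sub>R (W2 / 2) *\<^sub>R Wv b)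
        (r1 *\<^sub>R (W1 / 2) *\<^sub>R Wu a + r2 *\<^sub>R (W2 / 2) *\<^sub>R Wv b
          + p1\<^sup>2 *\<^sub>R ((dW1 / 2) *\<^sub>R Wu a + (W1 / 2 * d1) *\<^sub>R Wu' a)
          + p2\<^sup>2 *\<^sub>R ((dW2 / 2) *\<^sub>R Wv b + (W2 / 2 * d2) *\<^sub>R Wv' b))
        (enormal_dir a b)
   = - (1 + a\<^sup>2)\<^sup>2 * b ^ 3 * (p1 * W1 * a\<^sup>2 - p2 * W2) * (p1\<^sup>2 * W1 * d1 + p2\<^sup>2 * W2 * d2)"
proof -
  let ?e = "enormal_dir a b"
  let ?E2 = "r1 *\<^sub>R (W1 / 2) *\<^sub>R Wu a + r2 *\<^sub>R (W2 / 2) *\<^sub>R Wv b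
          + p1\<^sup>2 *\<^sub>R ((dW1 / 2) *\<^sub>R Wu a + (W1 / 2 * d1) *\<^sub>R Wu' a)
          + p2\<^sup>2 *\<^sub>R ((dW2 / 2) *\<^sub>R Wv b + (W2 / 2 * d2) *\<^sub>R Wv' b)"
  have "det3 (Wu a) ?E2 ?e
      = p1\<^sup>2 * (W1 / 2 * d1) * det3 (Wu a) (Wu' a) ?e + p2\<^sup>2 * (W2 / 2 * d2) * det3 (Wu a) (Wv' b) ?e"
    by (simp only: Wv_at_singular[OF ab] det3_add_mid det3_scaleR_mid det3_same mult_zero_right add_0)
  then have "det3 (p1 *\<^sub>R (W1 / 2) *\<^sub>R Wu a + p2 *\<^sub>R (W2 / 2) *\<^sub>R Wv b) ?E2 ?e
      = b\<^sup>2 / 2 * (p1 * W1 * a\<^sup>2 - p2 * W2)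
        * (p1\<^sup>2 * (W1 / 2 * d1) * (- 4 * (1 + a\<^sup>2)\<^sup>2 * b) + p2\<^sup>2 * (W2 / 2 * d2) * (- 4 * (1 + a\<^sup>2)\<^sup>2 * b))"
    unfolding singular_image_tangent det3_scaleR_left
      det3_Wu_Wu'_at_singular[OF ab] det3_Wu_Wv'_at_singular[OF ab] by (rule arg_cong)
  also have "\<dots> = - (1 + a\<^sup>2)\<^sup>2 * b ^ 3 * (p1 * W1 * a\<^sup>2 - p2 * W2) * (p1\<^sup>2 * W1 * d1 + p2\<^sup>2 * W2 * d2)"
    by (simp add: algebra_simps power2_eq_square power3_eq_cube)
  finally show ?thesis .
qed

end

lemma sgn_singular_curvature:
  fixes a b W1 W2 dW1 dW2 d1 d2 p1 p2 r1 r2 e1 e2 :: real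
  defines "E1 \<equiv> p1 *\<^sub>R (W1 / 2) *\<^sub>R Wu a + p2 *\<^sub>R (W2 / 2) *\<^sub>R Wv b"
    and "E2 \<equiv> r1 *\<^sub>R (W1 / 2) *\<^sub>R Wu a + r2 *\<^sub>R (W2 / 2) *\<^sub>R Wv b
          + p1\<^sup>2 *\<^sub>R ((dW1 / 2) *\<^sub>R Wu a + (W1 / 2 * d1) *\<^sub>R Wu' a)
          + p2\<^sup>2 *\<^sub>R ((dW2 / 2) *\<^sub>R Wv b + (W2 / 2 * d2) *\<^sub>R Wv' b)"
    and "D \<equiv> normal_sqlen a b"
  assumes ab: "a * b = 1" and W: "W1 \<noteq> 0" "W2 \<noteq> 0"
    and null: "e1 * W1 * a = e2 * W2 * b" and orient: "p1 * e2 - p2 * e1 > 0"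
    and tangent: "d1 * b * p1 + a * d2 * p2 = 0"
  shows "sgn (sgn (- (W1 * W2 / 2 * sqrt D) * (d1 * b * e1 + a * d2 * e2))
            * det3 E1 E2 ((1 / sqrt D) *\<^sub>R enormal_dir a b) / norm E1 ^ 3)
         = sgn (W1 * W2 * d1 * d2)"
proof -
  define \<mu> where "\<mu> = p1 * W1 * a\<^sup>2 - p2 * W2"
  define S where "S = p1\<^sup>2 * W1 * d1 + p2\<^sup>2 * W2 * d2"
  define S1 where "S1 = d1 * b * e1 + a * d2 * e2"
  have D: "sqrt D > 0" unfolding D_def using normal_sqlen_pos by simp
  have "\<mu> \<noteq> 0" unfolding \<mu>_def by (rule singular_image_tangent_nonzero[OF ab W(2) null orient])
  moreover have "b \<noteq> 0" using ab by auto
  ultimately have "E1 \<noteq> 0"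
    unfolding E1_def singular_image_tangent[OF ab] \<mu>_def[symmetric] using Wu_nonzero by simp
  then have norm_pos: "norm E1 ^ 3 > 0" by simp
  have "0 < a * b" using ab by simp
  then have "sgn b = sgn a" by (auto simp: zero_less_mult_iff)
  moreover have "sgn (b ^ 3) = sgn b"
    using \<open>b \<noteq> 0\<close> by (simp add: sgn_if power3_eq_cube zero_less_mult_iff mult_less_0_iff)
  ultimately have "sgn (b ^ 3) = sgn a" by simp
  have "sgn (- (W1 * W2 / 2 * sqrt D) * S1) = - sgn (W1 * W2 * S1)"
    using D by (simp add: sgn_mult)
  moreover have "det3 E1 E2 ((1 / sqrt D) *\<^sub>R enormal_dir a b)
      = - ((1 + a\<^sup>2)\<^sup>2 / sqrt D) * (b ^ 3 * \<mu> * S)"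
    unfolding E1_def E2_def det3_scaleR_right det3_singular_frame[OF ab] \<mu>_def S_def by simp
  ultimately have "sgn (- (W1 * W2 / 2 * sqrt D) * S1)
            * det3 E1 E2 ((1 / sqrt D) *\<^sub>R enormal_dir a b) / norm E1 ^ 3
      = ((1 + a\<^sup>2)\<^sup>2 / (sqrt D * norm E1 ^ 3)) * (sgn (W1 * W2 * S1) * (b ^ 3 * \<mu> * S))"
    by simp
  moreover have "1 + a\<^sup>2 > 0" by (simp add: add_pos_nonneg)
  then have "(1 + a\<^sup>2)\<^sup>2 / (sqrt D * norm E1 ^ 3) > 0" using D norm_pos by simp
  ultimately have "sgn (sgn (- (W1 * W2 / 2 * sqrt D) * S1)
            * det3 E1 E2 ((1 / sqrt D) *\<^sub>R enormal_dir a b) / norm E1 ^ 3)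
      = sgn (W1 * W2 * S1) * (sgn (b ^ 3) * sgn \<mu> * sgn S)"
    by (simp only: sgn_mult sgn_sgn sgn_pos mult_1_left)
  also have "\<dots> = sgn (W1 * W2 * S1 * \<mu> * S * a)"
    using \<open>sgn (b ^ 3) = sgn a\<close> by (simp add: sgn_mult ac_simps)
  also have "\<dots> = sgn (W1 * W2 * d1 * d2)"
    unfolding S1_def \<mu>_def S_def by (rule sgn_singular_curvature_identity[OF ab W null orient tangent])
  finally show ?thesis unfolding S1_def .
qed

section \<open>Minfaces with real Weierstrass data\<close>

locale minface =
  fixes U :: "(real \<times> real) set" and g1 g2 w1 w2 :: "real \<Rightarrow> real"
    and f :: "real \<times> real \<Rightarrow> real^3"
  assumes minface: "minface_real_W U g1 g2 w1 w2 f"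
begin

lemma open_U: "open U"
  using minface by (simp add: minface_real_W_def)

lemma open_fst_U: "open (fst ` U)" and open_snd_U: "open (snd ` U)"
  using open_U by (simp_all add: open_image_fst open_image_snd)

lemma is_interval_fst_U: "is_interval (fst ` U)" and is_interval_snd_U: "is_interval (snd ` U)"
proof -
  have "connected U" using minface by (simp add: minface_real_W_def)
  then show "is_interval (fst ` U)" "is_interval (snd ` U)"
    unfolding is_interval_connected_1
    by (auto intro!: connected_continuous_image continuous_on_fst continuous_on_snd continuous_on_id)
qed

lemma g1_DERIV: "u \<in> fst ` U \<Longrightarrow> (g1 has_real_derivative deriv g1 u) (at u)"
  and w1_DERIV: "u \<in> fst ` U \<Longrightarrow> (w1 has_real_derivative deriv w1 u) (at u)"
  and g2_DERIV: "v \<in> snd ` U \<Longrightarrow> (g2 has_real_derivative deriv g2 v) (at v)"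
  and w2_DERIV: "v \<in> snd ` U \<Longrightarrow> (w2 has_real_derivative deriv w2 v) (at v)"
  using minface open_fst_U open_snd_U smooth_on_imp_DERIV(1)
  unfolding minface_real_W_def by metis+

lemma continuous_on_deriv_g1: "continuous_on (fst ` U) (deriv g1)"
  and continuous_on_deriv_g2: "continuous_on (snd ` U) (deriv g2)"
  using minface open_fst_U open_snd_U smooth_on_imp_DERIV(2)
  unfolding minface_real_W_def by metis+

lemma w1_nonzero: "u \<in> fst ` U \<Longrightarrow> w1 u \<noteq> 0"
  and w2_nonzero: "v \<in> snd ` U \<Longrightarrow> w2 v \<noteq> 0"
  using minface by (auto simp: minface_real_W_def)

lemma at_within_regular_nontrivial:
  assumes "q \<in> sing_set U g1 g2"
  shows "at q within (U - sing_set U g1 g2) \<noteq> bot"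
proof -
  have "U - sing_set U g1 g2 = {q \<in> U. g1 (fst q) * g2 (snd q) \<noteq> 1}"
    by (auto simp: sing_set_def)
  then have "q \<in> closure (U - sing_set U g1 g2)"
    using minface assms by (auto simp: minface_real_W_def sing_set_def)
  then show ?thesis
    using assms by (simp add: trivial_limit_within closure_def)
qed

definition fu :: "real \<Rightarrow> real^3" where "fu u = (w1 u / 2) *\<^sub>R Wu (g1 u)"
definition fv :: "real \<Rightarrow> real^3" where "fv v = (w2 v / 2) *\<^sub>R Wv (g2 v)"
definition fuu :: "real \<Rightarrow> real^3" where
  "fuu u = (deriv w1 u / 2) *\<^sub>R Wu (g1 u) + (w1 u / 2 * deriv g1 u) *\<^sub>R Wu' (g1 u)"
definition fvv :: "real \<Rightarrow> real^3" where
  "fvv v = (deriv w2 v / 2) *\<^sub>R Wv (g2 v) + (w2 v / 2 * deriv g2 v) *\<^sub>R Wv' (g2 v)"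

lemma fu_has_vector_derivative:
  assumes "u \<in> fst ` U"
  shows "(fu has_vector_derivative fuu u) (at u)"
proof -
  have "((\<lambda>s. Wu (g1 s)) has_vector_derivative deriv g1 u *\<^sub>R Wu' (g1 u)) (at u)"
    using vector_diff_chain_at[OF g1_DERIV[OF assms, unfolded has_real_derivative_iff_has_vector_derivative]
        Wu_has_vector_derivative] by (simp add: o_def)
  then show ?thesis
    unfolding fu_def[abs_def] fuu_def
    by (auto intro!: derivative_eq_intros w1_DERIV[OF assms])
qed

lemma fv_has_vector_derivative:
  assumes "v \<in> snd ` U"
  shows "(fv has_vector_derivative fvv v) (at v)"
proof -
  have "((\<lambda>s. Wv (g2 s)) has_vector_derivative deriv g2 v *\<^sub>R Wv' (g2 v)) (at v)"
    using vector_diff_chain_at[OF g2_DERIV[OF assms, unfolded has_real_derivative_iff_has_vector_derivative]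
        Wv_has_vector_derivative] by (simp add: o_def)
  then show ?thesis
    unfolding fv_def[abs_def] fvv_def
    by (auto intro!: derivative_eq_intros w2_DERIV[OF assms])
qed

lemma continuous_on_fu: "continuous_on (fst ` U) fu"
  and continuous_on_fv: "continuous_on (snd ` U) fv"
  using fu_has_vector_derivative fv_has_vector_derivative
  by (meson continuous_at_imp_continuous_on has_vector_derivative_continuous)+

lemma f_has_derivative:
  assumes q: "q \<in> U"
  shows "(f has_derivative (\<lambda>k. fst k *\<^sub>R fu (fst q) + snd k *\<^sub>R fv (snd q))) (at q)"
proof -
  obtain u0 v0 where base: "(u0, v0) \<in> U"
    and f_eq: "\<And>u v. (u, v) \<in> U \<Longrightarrow> f (u, v) = oint u0 u fu + oint v0 v fv + f (u0, v0)"
    using minface unfolding minface_real_W_def fu_def[abs_def] fv_def[abs_def] Wu_def Wv_def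
    by (auto simp: mult.commute)
  have "((\<lambda>x. oint u0 x fu) has_vector_derivative fu (fst q)) (at (fst q))"
    using base q by (intro oint_has_vector_derivative[OF open_fst_U is_interval_fst_U _ _ continuous_on_fu]) force+
  moreover have "((\<lambda>x. oint v0 x fv) has_vector_derivative fv (snd q)) (at (snd q))"
    using base q by (intro oint_has_vector_derivative[OF open_snd_U is_interval_snd_U _ _ continuous_on_fv]) force+
  ultimately have "((\<lambda>x. oint u0 (fst x) fu + oint v0 (snd x) fv + f (u0, v0)) has_derivative
      (\<lambda>k. fst k *\<^sub>R fu (fst q) + snd k *\<^sub>R fv (snd q))) (at q)"
    by (auto intro!: derivative_eq_intros has_derivative_comp_fst has_derivative_comp_snd)
  then show ?thesis
    by (rule has_derivative_transform_within_open[OF _ open_U q]) (auto simp: f_eq)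
qed

lemma pdu_f: "q \<in> U \<Longrightarrow> pdu f q = fu (fst q)"
  and pdv_f: "q \<in> U \<Longrightarrow> pdv f q = fv (snd q)"
  unfolding pdu_def pdv_def by (simp_all add: frechet_derivative_at[OF f_has_derivative, symmetric])

lemma pdu_f_has_derivative:
  assumes q: "q \<in> U"
  shows "(pdu f has_derivative (\<lambda>k. fst k *\<^sub>R fuu (fst q))) (at q)"
proof (rule has_derivative_transform_within_open[OF _ open_U q])
  show "((\<lambda>x. fu (fst x)) has_derivative (\<lambda>k. fst k *\<^sub>R fuu (fst q))) (at q)"
    using q by (force intro: has_derivative_comp_fst fu_has_vector_derivative)
qed (simp add: pdu_f)

lemma pdv_f_has_derivative:
  assumes q: "q \<in> U"
  shows "(pdv f has_derivative (\<lambda>k. snd k *\<^sub>R fvv (snd q))) (at q)"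
proof (rule has_derivative_transform_within_open[OF _ open_U q])
  show "((\<lambda>x. fv (snd x)) has_derivative (\<lambda>k. snd k *\<^sub>R fvv (snd q))) (at q)"
    using q by (force intro: has_derivative_comp_snd fv_has_vector_derivative)
qed (simp add: pdv_f)

lemma pdu_pdu_f: "q \<in> U \<Longrightarrow> pdu (pdu f) q = fuu (fst q)"
  and pdv_pdu_f: "q \<in> U \<Longrightarrow> pdv (pdu f) q = 0"
  and pdv_pdv_f: "q \<in> U \<Longrightarrow> pdv (pdv f) q = fvv (snd q)"
  unfolding pdu_def[of "pdu f"] pdv_def[of "pdu f"] pdv_def[of "pdv f"]
  by (simp_all add: frechet_derivative_at[OF pdu_f_has_derivative, symmetric]
      frechet_derivative_at[OF pdv_f_has_derivative, symmetric])

lemma gaussK_eq: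
  assumes q: "q \<in> U" and regular: "g1 (fst q) * g2 (snd q) \<noteq> 1"
  shows "gaussK f q = 4 * deriv g1 (fst q) * deriv g2 (snd q)
           / (w1 (fst q) * w2 (snd q) * (1 - g1 (fst q) * g2 (snd q)) ^ 4)"
proof -
  define a b where "a = g1 (fst q)" "b = g2 (snd q)"
  have w: "w1 (fst q) \<noteq> 0" "w2 (snd q) \<noteq> 0"
    using q w1_nonzero w2_nonzero by force+
  \<comment> \<open>The chosen unit normal is \<open>\<plusminus>lnormal a b / \<bar>1 - a b\<bar>\<close>; \<open>K\<close> does not see the sign.\<close>
  define \<nu> where "\<nu> = (SOME \<nu>. lor \<nu> (fu (fst q)) = 0 \<and> lor \<nu> (fv (snd q)) = 0 \<and> lor \<nu> \<nu> = 1)"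
  have "lor \<nu> (fu (fst q)) = 0 \<and> lor \<nu> (fv (snd q)) = 0 \<and> lor \<nu> \<nu> = 1"
    unfolding \<nu>_def
  proof (rule someI_ex, intro exI conjI)
    let ?\<nu>0 = "(1 / \<bar>1 - a * b\<bar>) *\<^sub>R lnormal a b"
    show "lor ?\<nu>0 (fu (fst q)) = 0" "lor ?\<nu>0 (fv (snd q)) = 0"
      by (simp_all add: fu_def fv_def a_b_def lor_lnormal lor_commute[of "lnormal _ _"])
    show "lor ?\<nu>0 ?\<nu>0 = 1"
      using regular by (simp add: lor_lnormal a_b_def power2_eq_square abs_mult_self_eq)
  qed
  then have "lor \<nu> (Wu a) = 0" "lor \<nu> (Wv b) = 0" and unit: "lor \<nu> \<nu> = 1"
    using w by (simp_all add: fu_def fv_def a_b_def)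
  then obtain c where \<nu>: "\<nu> = c *\<^sub>R lnormal a b"
    using lor_orthogonal_Wu_Wv regular a_b_def by blast
  with unit have c: "c\<^sup>2 * (1 - a * b)\<^sup>2 = 1"
    by (simp add: lor_lnormal power2_eq_square)
  have L: "lor (fuu (fst q)) \<nu> = - c * w1 (fst q) * deriv g1 (fst q) * (1 - a * b)"
    and N: "lor (fvv (snd q)) \<nu> = c * w2 (snd q) * deriv g2 (snd q) * (1 - a * b)"
    unfolding \<nu> fuu_def fvv_def a_b_def[symmetric] by (simp_all add: lor_lnormal field_simps)
  have E: "lor (fu (fst q)) (fu (fst q)) = 0" and G: "lor (fv (snd q)) (fv (snd q)) = 0"
    and F: "lor (fu (fst q)) (fv (snd q)) = w1 (fst q) * w2 (snd q) / 2 * (1 - a * b)\<^sup>2"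
    unfolding fu_def fv_def a_b_def[symmetric] by (simp_all add: lor_Wu_Wv)
  have "gaussK f q = (lor (fuu (fst q)) \<nu> * lor (fvv (snd q)) \<nu>)
      / (- (lor (fu (fst q)) (fv (snd q)))\<^sup>2)"
    unfolding gaussK_def Let_def pdu_f[OF q] pdv_f[OF q] pdu_pdu_f[OF q] pdv_pdu_f[OF q]
      pdv_pdv_f[OF q] \<nu>_def[symmetric] E G by simp
  also have "\<dots> = 4 * (c\<^sup>2 * (1 - a * b)\<^sup>2) * deriv g1 (fst q) * deriv g2 (snd q)
      / (w1 (fst q) * w2 (snd q) * (1 - a * b) ^ 4)"
  proof -
    have "(- c * W1 * d1 * t) * (c * W2 * d2 * t) / (- (W1 * W2 / 2 * t\<^sup>2)\<^sup>2)
        = 4 * (c\<^sup>2 * t\<^sup>2) * d1 * d2 / (W1 * W2 * t ^ 4)"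
      if "W1 \<noteq> 0" "W2 \<noteq> 0" "t \<noteq> 0" for W1 W2 d1 d2 t :: real
      using that by (simp add: field_simps power2_eq_square eval_nat_numeral)
    then show ?thesis unfolding L N F using w regular[folded a_b_def] by simp
  qed
  finally show ?thesis using c by (simp add: a_b_def)
qed

definition K_num :: "real \<times> real \<Rightarrow> real" where
  "K_num q = w1 (fst q) * w2 (snd q) * deriv g1 (fst q) * deriv g2 (snd q)"

lemma sgn_gaussK:
  assumes "q \<in> U - sing_set U g1 g2"
  shows "sgn (gaussK f q) = sgn (K_num q)"
proof -
  have q: "q \<in> U" and regular: "g1 (fst q) * g2 (snd q) \<noteq> 1"
    using assms by (auto simp: sing_set_def)
  have w: "w1 (fst q) * w2 (snd q) \<noteq> 0"
    using q w1_nonzero w2_nonzero by force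
  have eq: "gaussK f q = K_num q * (4 / ((w1 (fst q) * w2 (snd q))\<^sup>2 * (1 - g1 (fst q) * g2 (snd q)) ^ 4))"
    unfolding gaussK_eq[OF q regular] K_num_def using w by (simp add: field_simps power2_eq_square)
  have "4 / ((w1 (fst q) * w2 (snd q))\<^sup>2 * (1 - g1 (fst q) * g2 (snd q)) ^ 4) > 0"
    using w regular by (simp add: zero_less_mult_iff)
  then show ?thesis unfolding eq sgn_mult by simp
qed

lemma isCont_K_num:
  assumes "q \<in> U"
  shows "isCont K_num q"
proof -
  have comp_fst: "continuous_on U (\<lambda>q. h (fst q))" if "continuous_on (fst ` U) h" for h :: "real \<Rightarrow> real"
    using that by (rule continuous_on_compose2) (auto intro: continuous_intros)
  have comp_snd: "continuous_on U (\<lambda>q. h (snd q))" if "continuous_on (snd ` U) h" for h :: "real \<Rightarrow> real"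
    using that by (rule continuous_on_compose2) (auto intro: continuous_intros)
  have "continuous_on (fst ` U) w1" "continuous_on (snd ` U) w2"
    using w1_DERIV w2_DERIV by (meson DERIV_isCont continuous_at_imp_continuous_on)+
  then have "continuous_on U K_num"
    unfolding K_num_def[abs_def]
    by (intro continuous_on_mult comp_fst comp_snd continuous_on_deriv_g1 continuous_on_deriv_g2)
  then show ?thesis
    using open_U assms continuous_on_eq_continuous_at by blast
qed

lemma frequently_gaussK_zero:
  assumes q: "q \<in> sing_set U g1 g2" and "K_num q = 0"
  shows "\<exists>\<^sub>F x in at q within (U - sing_set U g1 g2). gaussK f x = 0"
proof -
  have regular_eq: "U - sing_set U g1 g2 = {x \<in> U. g1 (fst x) * g2 (snd x) \<noteq> 1}"
    by (auto simp: sing_set_def)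
  have "q \<in> U" "fst q \<in> fst ` U" "snd q \<in> snd ` U" using q by (auto simp: sing_set_def)
  then have "deriv g1 (fst q) = 0 \<or> deriv g2 (snd q) = 0"
    using assms(2) w1_nonzero w2_nonzero by (auto simp: K_num_def)
  moreover have "at q within {x \<in> U. g1 (fst x) * g2 (snd x) \<noteq> 1} \<noteq> bot"
    using at_within_regular_nontrivial[OF q] by (simp add: regular_eq)
  ultimately have "\<exists>\<^sub>F x in at q within (U - sing_set U g1 g2). deriv g1 (fst x) = 0 \<or> deriv g2 (snd x) = 0"
    unfolding regular_eq using q open_U g1_DERIV g2_DERIV
    by (intro frequently_deriv_zero_near_singular) (auto simp: sing_set_def)
  moreover have "\<forall>\<^sub>F x in at q within (U - sing_set U g1 g2). x \<in> U - sing_set U g1 g2"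
    by (simp add: eventually_at_filter)
  ultimately show ?thesis
    by (rule frequently_elim1[OF frequently_eventually_frequently]) (auto simp: gaussK_eq sing_set_def)
qed

lemma eventually_sgn_gaussK_iff:
  assumes q: "q \<in> sing_set U g1 g2" and "\<sigma> \<noteq> 0"
  shows "(\<forall>\<^sub>F x in at q within (U - sing_set U g1 g2). sgn (gaussK f x) = \<sigma>) \<longleftrightarrow> sgn (K_num q) = \<sigma>"
proof -
  let ?F = "at q within (U - sing_set U g1 g2)"
  have nonzero: "\<forall>\<^sub>F x in ?F. sgn (gaussK f x) = sgn (K_num q)" if "K_num q \<noteq> 0"
  proof -
    have "q \<in> U" using q by (simp add: sing_set_def)
    then have "\<forall>\<^sub>F x in ?F. sgn (K_num x) = sgn (K_num q)"
      using eventually_sgn_eq_at[OF isCont_K_num that] filter_leD[OF at_le[OF subset_UNIV]] by blast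
    moreover have "\<forall>\<^sub>F x in ?F. sgn (gaussK f x) = sgn (K_num x)"
      by (simp add: eventually_at_filter sgn_gaussK)
    ultimately show ?thesis by eventually_elim simp
  qed
  show ?thesis
  proof
    assume ev: "\<forall>\<^sub>F x in ?F. sgn (gaussK f x) = \<sigma>"
    show "sgn (K_num q) = \<sigma>"
    proof (cases "K_num q = 0")
      case True
      from frequently_eventually_frequently[OF frequently_gaussK_zero[OF q True] ev]
      show ?thesis using \<open>\<sigma> \<noteq> 0\<close> by (auto dest: frequently_ex)
    next
      case False
      from eventually_conj[OF ev nonzero[OF False]]
      have "\<exists>\<^sub>F x in ?F. sgn (K_num q) = \<sigma>"
        by (rule eventually_frequently[OF at_within_regular_nontrivial[OF q], THEN frequently_elim1]) simp
      then show ?thesis by (auto dest: frequently_ex)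
    qed
  next
    assume "sgn (K_num q) = \<sigma>"
    then show "\<forall>\<^sub>F x in ?F. sgn (gaussK f x) = \<sigma>"
      using nonzero \<open>\<sigma> \<noteq> 0\<close> by force
  qed
qed

lemma lam_eq:
  assumes q: "q \<in> U"
  shows "lam f g1 g2 q = w1 (fst q) * w2 (snd q) / 2 * sqrt (normal_sqlen (g1 (fst q)) (g2 (snd q)))
           * (1 - g1 (fst q) * g2 (snd q))"
proof -
  define s where "s = sqrt (normal_sqlen (g1 (fst q)) (g2 (snd q)))"
  have "s > 0" using normal_sqlen_pos s_def by simp
  moreover have "normal_sqlen (g1 (fst q)) (g2 (snd q)) = s\<^sup>2"
    using normal_sqlen_pos s_def by (simp add: less_imp_le)
  ultimately show ?thesis
    unfolding lam_def pdu_f[OF q] pdv_f[OF q] enormal_eq fu_def fv_def s_def[symmetric]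
    by (simp add: det3_scaleR_left det3_scaleR_mid det3_scaleR_right det3_Wu_Wv_enormal_dir
        field_simps power2_eq_square)
qed

lemma lam_has_derivative_at_singular:
  assumes q: "q \<in> sing_set U g1 g2"
  shows "(lam f g1 g2 has_derivative
    (\<lambda>k. - (w1 (fst q) * w2 (snd q) / 2 * sqrt (normal_sqlen (g1 (fst q)) (g2 (snd q))))
         * (deriv g1 (fst q) * g2 (snd q) * fst k + g1 (fst q) * deriv g2 (snd q) * snd k))) (at q)"
proof -
  have qU: "q \<in> U" and sing: "g1 (fst q) * g2 (snd q) = 1" using q by (auto simp: sing_set_def)
  have u: "fst q \<in> fst ` U" and v: "snd q \<in> snd ` U" using qU by force+
  define H where "H x = w1 (fst x) * w2 (snd x) / 2 * sqrt (normal_sqlen (g1 (fst x)) (g2 (snd x)))" for x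
  have "H differentiable (at q)"
    unfolding H_def[abs_def] normal_sqlen_def
    using normal_sqlen_pos[of "g1 (fst q)" "g2 (snd q)"]
    by (intro differentiableI)
      (auto intro!: derivative_eq_intros has_derivative_real_comp_fst has_derivative_real_comp_snd
        g1_DERIV[OF u] g2_DERIV[OF v] w1_DERIV[OF u] w2_DERIV[OF v] simp: normal_sqlen_def)
  then obtain H' where "(H has_derivative H') (at q)" by (auto simp: differentiable_def)
  then have "((\<lambda>x. H x * (1 - g1 (fst x) * g2 (snd x))) has_derivative
      (\<lambda>k. H q * (0 - (g1 (fst q) * (snd k * deriv g2 (snd q)) + fst k * deriv g1 (fst q) * g2 (snd q)))
         + H' k * (1 - g1 (fst q) * g2 (snd q)))) (at q)"
    by (auto intro!: derivative_eq_intros has_derivative_real_comp_fst has_derivative_real_comp_snd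
        g1_DERIV[OF u] g2_DERIV[OF v])
  then show ?thesis
    using sing
    by (auto intro: has_derivative_transform_within_open[OF _ open_U qU] simp: lam_eq H_def algebra_simps)
qed

lemma image_curve_has_vector_derivative:
  assumes "\<gamma> s \<in> U" and "(\<gamma> has_vector_derivative V) (at s)"
  shows "((f \<circ> \<gamma>) has_vector_derivative fst V *\<^sub>R fu (fst (\<gamma> s)) + snd V *\<^sub>R fv (snd (\<gamma> s))) (at s)"
  using diff_chain_at[OF assms(2)[unfolded has_vector_derivative_def] f_has_derivative[OF assms(1)]]
  by (simp add: has_vector_derivative_def o_def scaleR_add_right)

lemma image_curve_second_derivative:
  assumes I: "open I" "t \<in> I" and "\<gamma> ` I \<subseteq> U"
    and \<gamma>': "\<And>s. s \<in> I \<Longrightarrow> (\<gamma> has_vector_derivative \<gamma>' s) (at s)"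
    and \<gamma>'': "(\<gamma>' has_vector_derivative V) (at t)"
  shows "((\<lambda>s. vector_derivative (f \<circ> \<gamma>) (at s)) has_vector_derivative
      fst V *\<^sub>R fu (fst (\<gamma> t)) + snd V *\<^sub>R fv (snd (\<gamma> t))
      + (fst (\<gamma>' t))\<^sup>2 *\<^sub>R fuu (fst (\<gamma> t)) + (snd (\<gamma>' t))\<^sup>2 *\<^sub>R fvv (snd (\<gamma> t))) (at t)"
proof -
  have u: "fst (\<gamma> t) \<in> fst ` U" and v: "snd (\<gamma> t) \<in> snd ` U" using assms(3) I by force+
  have "((\<lambda>s. fst (\<gamma> s)) has_vector_derivative fst (\<gamma>' t)) (at t)"
    and "((\<lambda>s. snd (\<gamma> s)) has_vector_derivative snd (\<gamma>' t)) (at t)"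
    using has_real_derivative_fst[OF \<gamma>'[OF I(2)]] has_real_derivative_snd[OF \<gamma>'[OF I(2)]]
    by (simp_all add: has_real_derivative_iff_has_vector_derivative)
  from vector_diff_chain_at[OF this(1) fu_has_vector_derivative[OF u]]
    vector_diff_chain_at[OF this(2) fv_has_vector_derivative[OF v]]
  have "((\<lambda>s. fst (\<gamma>' s) *\<^sub>R fu (fst (\<gamma> s)) + snd (\<gamma>' s) *\<^sub>R fv (snd (\<gamma> s))) has_vector_derivative
      fst V *\<^sub>R fu (fst (\<gamma> t)) + snd V *\<^sub>R fv (snd (\<gamma> t))
      + (fst (\<gamma>' t))\<^sup>2 *\<^sub>R fuu (fst (\<gamma> t)) + (snd (\<gamma>' t))\<^sup>2 *\<^sub>R fvv (snd (\<gamma> t))) (at t)"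
    by (auto intro!: derivative_eq_intros has_real_derivative_fst[OF \<gamma>''] has_real_derivative_snd[OF \<gamma>'']
        simp: o_def power2_eq_square algebra_simps)
  then show ?thesis
    by (rule has_vector_derivative_transform_within_open[OF _ I])
      (use assms(3) \<gamma>' in \<open>auto intro!: vector_derivative_at[symmetric] image_curve_has_vector_derivative\<close>)
qed

lemma singular_curve_tangent:
  assumes I: "open I" "t \<in> I" and sing: "\<gamma> ` I \<subseteq> sing_set U g1 g2"
    and \<gamma>': "(\<gamma> has_vector_derivative V) (at t)"
  shows "deriv g1 (fst (\<gamma> t)) * g2 (snd (\<gamma> t)) * fst V + g1 (fst (\<gamma> t)) * deriv g2 (snd (\<gamma> t)) * snd V = 0"
proof -
  have u: "fst (\<gamma> t) \<in> fst ` U" and v: "snd (\<gamma> t) \<in> snd ` U"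
    using sing I by (force simp: sing_set_def)+
  have "((\<lambda>s. g1 (fst (\<gamma> s)) * g2 (snd (\<gamma> s))) has_real_derivative
      deriv g1 (fst (\<gamma> t)) * fst V * g2 (snd (\<gamma> t)) + deriv g2 (snd (\<gamma> t)) * snd V * g1 (fst (\<gamma> t))) (at t)"
    using DERIV_mult[OF DERIV_chain2[OF g1_DERIV[OF u] has_real_derivative_fst[OF \<gamma>']]
        DERIV_chain2[OF g2_DERIV[OF v] has_real_derivative_snd[OF \<gamma>']]] .
  moreover have "((\<lambda>s. g1 (fst (\<gamma> s)) * g2 (snd (\<gamma> s))) has_real_derivative 0) (at t)"
    by (rule has_field_derivative_transform_within_open[OF DERIV_const[of 1] I])
      (use sing in \<open>auto simp: sing_set_def\<close>)
  ultimately have "deriv g1 (fst (\<gamma> t)) * fst V * g2 (snd (\<gamma> t))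
      + deriv g2 (snd (\<gamma> t)) * snd V * g1 (fst (\<gamma> t)) = 0"
    by (rule DERIV_unique)
  then show ?thesis by (simp add: algebra_simps)
qed

lemma null_vector_relation:
  assumes "q \<in> U" "frechet_derivative f (at q) \<eta> = 0"
  shows "fst \<eta> * w1 (fst q) * g1 (fst q) = snd \<eta> * w2 (snd q) * g2 (snd q)"
proof -
  have "fst \<eta> *\<^sub>R fu (fst q) + snd \<eta> *\<^sub>R fv (snd q) = 0"
    using assms by (simp add: frechet_derivative_at[OF f_has_derivative[OF assms(1)], symmetric])
  then have "(fst \<eta> *\<^sub>R fu (fst q) + snd \<eta> *\<^sub>R fv (snd q)) $ 3 = 0" by simp
  then show ?thesis by (simp add: fu_def fv_def Wu_def Wv_def algebra_simps)
qed

lemma sgn_sing_curv: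
  assumes I: "open I" "t \<in> I" and sing: "\<gamma> ` I \<subseteq> sing_set U g1 g2" and "smooth_on I \<gamma>"
    and null: "frechet_derivative f (at (\<gamma> t)) (\<eta> t) = 0"
    and orient: "fst (vector_derivative \<gamma> (at t)) * snd (\<eta> t)
                 - snd (vector_derivative \<gamma> (at t)) * fst (\<eta> t) > 0"
  shows "sgn (sing_curv f g1 g2 \<gamma> \<eta> t) = sgn (K_num (\<gamma> t))"
proof -
  define q where "q = \<gamma> t"
  define \<gamma>' where "\<gamma>' s = vector_derivative \<gamma> (at s)" for s
  define V where "V = vector_derivative \<gamma>' (at t)"
  have \<gamma>'_deriv: "(\<gamma> has_vector_derivative \<gamma>' s) (at s)" if "s \<in> I" for s
    unfolding \<gamma>'_def using smooth_on_imp_vector_derivative(1)[OF assms(4) I(1) that] .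
  have V: "(\<gamma>' has_vector_derivative V) (at t)"
    unfolding V_def \<gamma>'_def using smooth_on_imp_vector_derivative(2)[OF assms(4) I] .
  have in_U: "\<gamma> ` I \<subseteq> U" and q_sing: "q \<in> sing_set U g1 g2"
    using sing I unfolding q_def sing_set_def by auto
  then have qU: "q \<in> U" and ab: "g1 (fst q) * g2 (snd q) = 1"
    and u: "fst q \<in> fst ` U" and v: "snd q \<in> snd ` U"
    by (force simp: sing_set_def)+
  have E1: "vector_derivative (f \<circ> \<gamma>) (at t) = fst (\<gamma>' t) *\<^sub>R fu (fst q) + snd (\<gamma>' t) *\<^sub>R fv (snd q)"
    unfolding q_def
    by (rule vector_derivative_at[OF image_curve_has_vector_derivative[OF qU[unfolded q_def] \<gamma>'_deriv[OF I(2)]]])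
  have E2: "vector_derivative (\<lambda>s. vector_derivative (f \<circ> \<gamma>) (at s)) (at t)
      = fst V *\<^sub>R fu (fst q) + snd V *\<^sub>R fv (snd q)
        + (fst (\<gamma>' t))\<^sup>2 *\<^sub>R fuu (fst q) + (snd (\<gamma>' t))\<^sup>2 *\<^sub>R fvv (snd q)"
    unfolding q_def by (rule vector_derivative_at[OF image_curve_second_derivative[OF I in_U \<gamma>'_deriv V]])
  have "sgn (sing_curv f g1 g2 \<gamma> \<eta> t) = sgn (
      sgn (- (w1 (fst q) * w2 (snd q) / 2 * sqrt (normal_sqlen (g1 (fst q)) (g2 (snd q))))
           * (deriv g1 (fst q) * g2 (snd q) * fst (\<eta> t) + g1 (fst q) * deriv g2 (snd q) * snd (\<eta> t)))
      * det3 (fst (\<gamma>' t) *\<^sub>R fu (fst q) + snd (\<gamma>' t) *\<^sub>R fv (snd q))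
          (fst V *\<^sub>R fu (fst q) + snd V *\<^sub>R fv (snd q)
           + (fst (\<gamma>' t))\<^sup>2 *\<^sub>R fuu (fst q) + (snd (\<gamma>' t))\<^sup>2 *\<^sub>R fvv (snd q))
          (enormal g1 g2 q)
      / norm (fst (\<gamma>' t) *\<^sub>R fu (fst q) + snd (\<gamma>' t) *\<^sub>R fv (snd q)) ^ 3)"
    unfolding sing_curv_def Let_def E1 E2 q_def
      frechet_derivative_at[OF lam_has_derivative_at_singular[OF q_sing[unfolded q_def]], symmetric]
    by (simp only:)
  also have "\<dots> = sgn (w1 (fst q) * w2 (snd q) * deriv g1 (fst q) * deriv g2 (snd q))"
    unfolding fu_def fv_def fuu_def fvv_def enormal_eq
  proof (rule sgn_singular_curvature[OF ab])
    show "w1 (fst q) \<noteq> 0" "w2 (snd q) \<noteq> 0" using u v by (simp_all add: w1_nonzero w2_nonzero)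
    show "fst (\<eta> t) * w1 (fst q) * g1 (fst q) = snd (\<eta> t) * w2 (snd q) * g2 (snd q)"
      using null_vector_relation[OF qU null[folded q_def]] .
    show "fst (\<gamma>' t) * snd (\<eta> t) - snd (\<gamma>' t) * fst (\<eta> t) > 0"
      using orient unfolding \<gamma>'_def .
    show "deriv g1 (fst q) * g2 (snd q) * fst (\<gamma>' t) + g1 (fst q) * deriv g2 (snd q) * snd (\<gamma>' t) = 0"
      unfolding q_def by (rule singular_curve_tangent[OF I sing \<gamma>'_deriv[OF I(2)]])
  qed
  finally show ?thesis unfolding K_num_def q_def .
qed

end

theorem theorem4p8:
  fixes U :: "(real \<times> real) set"
    and g1 g2 w1 w2 :: "real \<Rightarrow> real"
    and f :: "real \<times> real \<Rightarrow> real^3"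
    and I :: "real set"
    and \<gamma> \<eta> :: "real \<Rightarrow> real \<times> real"
  assumes mf: "minface_real_W U g1 g2 w1 w2 f"
    and I: "open I" "is_interval I" "0 \<in> I"
    and \<gamma>_smooth: "smooth_on I \<gamma>"
    and \<gamma>_reg: "\<forall>t\<in>I. vector_derivative \<gamma> (at t) \<noteq> 0"
    and \<gamma>_param: "\<exists>V. open V \<and> \<gamma> ` I \<subseteq> V \<and> V \<subseteq> U \<and> sing_set U g1 g2 \<inter> V = \<gamma> ` I"
    and cusp: "\<forall>t\<in>I. cuspidal_edge U f (\<gamma> t)"
    and \<eta>_null: "\<forall>t\<in>I. \<eta> t \<noteq> 0 \<and> frechet_derivative f (at (\<gamma> t)) (\<eta> t) = 0"
    and \<eta>_orient: "\<forall>t\<in>I. fst (vector_derivative \<gamma> (at t)) * snd (\<eta> t)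
                        - snd (vector_derivative \<gamma> (at t)) * fst (\<eta> t) > 0"
  shows "\<forall>t\<in>I.
           (sing_curv f g1 g2 \<gamma> \<eta> t > 0 \<longleftrightarrow>
              (\<forall>\<^sub>F q in at (\<gamma> t) within (U - sing_set U g1 g2). gaussK f q > 0)) \<and>
           (sing_curv f g1 g2 \<gamma> \<eta> t < 0 \<longleftrightarrow>
              (\<forall>\<^sub>F q in at (\<gamma> t) within (U - sing_set U g1 g2). gaussK f q < 0)) \<and>
           (sing_curv f g1 g2 \<gamma> \<eta> t = 0 \<longleftrightarrow>
              deriv g1 (fst (\<gamma> t)) = 0 \<or> deriv g2 (snd (\<gamma> t)) = 0)"
proof -
  interpret minface U g1 g2 w1 w2 f by unfold_locales (fact mf)
  have sing: "\<gamma> ` I \<subseteq> sing_set U g1 g2" using \<gamma>_param by blast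
  let ?F = "\<lambda>t. at (\<gamma> t) within (U - sing_set U g1 g2)"
  have sgn_eq: "sgn (sing_curv f g1 g2 \<gamma> \<eta> t) = sgn (K_num (\<gamma> t))" if "t \<in> I" for t
    using sgn_sing_curv[OF I(1) that sing \<gamma>_smooth] \<eta>_null \<eta>_orient that by blast
  have "(\<forall>\<^sub>F q in ?F t. gaussK f q > 0) \<longleftrightarrow> K_num (\<gamma> t) > 0"
    and "(\<forall>\<^sub>F q in ?F t. gaussK f q < 0) \<longleftrightarrow> K_num (\<gamma> t) < 0" if "t \<in> I" for t
    using eventually_sgn_gaussK_iff[of "\<gamma> t" 1] eventually_sgn_gaussK_iff[of "\<gamma> t" "-1"] sing that
    by (auto simp: sgn_1_pos sgn_1_neg)
  moreover have "K_num (\<gamma> t) = 0 \<longleftrightarrow> deriv g1 (fst (\<gamma> t)) = 0 \<or> deriv g2 (snd (\<gamma> t)) = 0"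
    if "t \<in> I" for t
    using sing that w1_nonzero w2_nonzero by (force simp: K_num_def sing_set_def)
  ultimately show ?thesis
    by (simp add: sgn_eq_sgn_iff[OF sgn_eq])
qed

end
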